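(* Let $\mathcal{M}=(E,\rho)$ be a $q$-matroid, $l=\dim\mathrm{cl}(0)$ and $f=\dim E-l$. Then $\mathcal{Z}(\mathcal{M})=\{\mathrm{cl}(0)\}$ if and only if $\mathcal{M}\approx\mathcal{U}_{0,l}\oplus\mathcal{U}_{f,f}$. In particular, $\mathcal{M}$ has exactly one cyclic flat if and only if it is (equivalent to) the direct sum of a trivial and a free $q$-matroid.
   Context: Let $\mathbb{F}=\mathbb{F}_q$. A $q$-matroid is $\mathcal{M}=(E,\rho)$, $E$ a finite-dimensional $\mathbb{F}$-vector space, $\rho$ from subspaces to $\mathbb{Z}_{\ge0}$ with $0\le\rho(V)\le\dim V$, monotone and submodular. Flat: $\rho(F+\langle x\rangle)>\rho(F)$ for all $x\notin F$. Closure: $\mathrm{cl}(V)=\sum\{\langle x\rangle:\rho(V+\langle x\rangle)=\rho(V)\}$. Cyclic core: $\mathrm{cyc}(V)=\{x\in V\mid\rho(W)=\rho(V)\text{ for all }W\le V\text{ with }W+\langle x\rangle=V\}$; cyclic: $\mathrm{cyc}(V)=V$; $\mathcal{Z}(\mathcal{M})$: the set of cyclic flats. $\mathcal{U}_{0,n}$ (trivial) and $\mathcal{U}_{n,n}$ (free) are the $q$-matroids on an $n$-dimensional space with $\rho\equiv0$, resp. $\rho(V)=\dim V$. Equivalence $\approx$: an $\mathbb{F}$-isomorphism of ground spaces preserving rank. Direct sum: for $E=E_1\oplus E_2$ with projections $\pi_i$, $\mathcal{M}_1\oplus\mathcal{M}_2=(E,\rho)$ where $\rho(V)=\dim V+\min_{X\le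 V}(\rho_1(\pi_1(X))+\rho_2(\pi_2(X))-\dim X)$. *)

theory Defs
  imports Main "HOL.Vector_Spaces" "HOL-Library.Function_Algebras" "HOL-Library.Product_Plus"
begin

definition subsp :: "('a::field \<Rightarrow> 'b::ab_group_add \<Rightarrow> 'b) \<Rightarrow> 'b set \<Rightarrow> 'b set \<Rightarrow> bool" where
  "subsp sc E V \<longleftrightarrow> Modules.module.subspace sc V \<and> V \<subseteq> E"

definition ground_space :: "('a::field \<Rightarrow> 'b::ab_group_add \<Rightarrow> 'b) \<Rightarrow> 'b set \<Rightarrow> bool" where
  "ground_space sc E \<longleftrightarrow> vector_space sc \<and> Modules.module.subspace sc E \<and>
     (\<exists>B. finite B \<and> B \<subseteq> E \<and> Modules.module.span sc B = E)"

text \<open>Sum of subspaces V + W is the span of the union.\<close>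
definition qmatroid :: "('a::{field,finite} \<Rightarrow> 'b::ab_group_add \<Rightarrow> 'b) \<Rightarrow> 'b set \<Rightarrow> ('b set \<Rightarrow> nat) \<Rightarrow> bool" where
  "qmatroid sc E \<rho> \<longleftrightarrow> ground_space sc E \<and>
     (\<forall>V. subsp sc E V \<longrightarrow> \<rho> V \<le> Vector_Spaces.vector_space.dim sc V) \<and>
     (\<forall>V W. subsp sc E V \<and> subsp sc E W \<and> V \<subseteq> W \<longrightarrow> \<rho> V \<le> \<rho> W) \<and>
     (\<forall>V W. subsp sc E V \<and> subsp sc E W \<longrightarrow>
        \<rho> (Modules.module.span sc (V \<union> W)) + \<rho> (V \<inter> W) \<le> \<rho> V + \<rho> W)"

definition qflat :: "('a::field \<Rightarrow> 'b::ab_group_add \<Rightarrow> 'b) \<Rightarrow> 'b set \<Rightarrow> ('b set \<Rightarrow> nat) \<Rightarrow> 'b set \<Rightarrow> bool" where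
  "qflat sc E \<rho> F \<longleftrightarrow> subsp sc E F \<and>
     (\<forall>x \<in> E - F. \<rho> (Modules.module.span sc (F \<union> Modules.module.span sc {x})) > \<rho> F)"

definition qcl :: "('a::field \<Rightarrow> 'b::ab_group_add \<Rightarrow> 'b) \<Rightarrow> 'b set \<Rightarrow> ('b set \<Rightarrow> nat) \<Rightarrow> 'b set \<Rightarrow> 'b set" where
  "qcl sc E \<rho> V = Modules.module.span sc
     (\<Union>{Modules.module.span sc {x} | x. x \<in> E \<and> \<rho> (Modules.module.span sc (V \<union> Modules.module.span sc {x})) = \<rho> V})"

definition qcyc :: "('a::field \<Rightarrow> 'b::ab_group_add \<Rightarrow> 'b) \<Rightarrow> ('b set \<Rightarrow> nat) \<Rightarrow> 'b set \<Rightarrow> 'b set" where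
  "qcyc sc \<rho> V = {x \<in> V. \<forall>W. Modules.module.subspace sc W \<and> W \<subseteq> V \<and>
      Modules.module.span sc (W \<union> Modules.module.span sc {x}) = V \<longrightarrow> \<rho> W = \<rho> V}"

definition qcyclic :: "('a::field \<Rightarrow> 'b::ab_group_add \<Rightarrow> 'b) \<Rightarrow> ('b set \<Rightarrow> nat) \<Rightarrow> 'b set \<Rightarrow> bool" where
  "qcyclic sc \<rho> V \<longleftrightarrow> qcyc sc \<rho> V = V"

definition cyclic_flats :: "('a::field \<Rightarrow> 'b::ab_group_add \<Rightarrow> 'b) \<Rightarrow> 'b set \<Rightarrow> ('b set \<Rightarrow> nat) \<Rightarrow> 'b set set" where
  "cyclic_flats sc E \<rho> = {V. qflat sc E \<rho> V \<and> qcyclic sc \<rho> V}"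

definition qequiv ::
  "('a::field \<Rightarrow> 'b::ab_group_add \<Rightarrow> 'b) \<Rightarrow> 'b set \<Rightarrow> ('b set \<Rightarrow> nat) \<Rightarrow>
   ('a \<Rightarrow> 'c::ab_group_add \<Rightarrow> 'c) \<Rightarrow> 'c set \<Rightarrow> ('c set \<Rightarrow> nat) \<Rightarrow> bool" where
  "qequiv sc1 E1 \<rho>1 sc2 E2 \<rho>2 \<longleftrightarrow> (\<exists>\<phi>. bij_betw \<phi> E1 E2 \<and>
     (\<forall>x\<in>E1. \<forall>y\<in>E1. \<phi> (x + y) = \<phi> x + \<phi> y) \<and>
     (\<forall>c. \<forall>x\<in>E1. \<phi> (sc1 c x) = sc2 c (\<phi> x)) \<and>
     (\<forall>V. subsp sc1 E1 V \<longrightarrow> \<rho>2 (\<phi> ` V) = \<rho>1 V))"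

text \<open>Direct sum, realised on the product type with carrier E1 \<times> E2
(projections fst and snd).\<close>
definition sum_scale :: "('a \<Rightarrow> 'b \<Rightarrow> 'b) \<Rightarrow> ('a \<Rightarrow> 'c \<Rightarrow> 'c) \<Rightarrow> 'a \<Rightarrow> 'b \<times> 'c \<Rightarrow> 'b \<times> 'c" where
  "sum_scale sc1 sc2 c p = (sc1 c (fst p), sc2 c (snd p))"

definition sum_rank ::
  "('a::field \<Rightarrow> 'b::ab_group_add \<Rightarrow> 'b) \<Rightarrow> ('b set \<Rightarrow> nat) \<Rightarrow>
   ('a \<Rightarrow> 'c::ab_group_add \<Rightarrow> 'c) \<Rightarrow> ('c set \<Rightarrow> nat) \<Rightarrow> ('b \<times> 'c) set \<Rightarrow> nat" where
  "sum_rank sc1 \<rho>1 sc2 \<rho>2 V = nat (int (Vector_Spaces.vector_space.dim (sum_scale sc1 sc2) V) +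
     Min ((\<lambda>X. int (\<rho>1 (fst ` X)) + int (\<rho>2 (snd ` X)) - int (Vector_Spaces.vector_space.dim (sum_scale sc1 sc2) X))
          ` {X. Modules.module.subspace (sum_scale sc1 sc2) X \<and> X \<subseteq> V}))"

definition fscale :: "'a::field \<Rightarrow> (nat \<Rightarrow> 'a) \<Rightarrow> (nat \<Rightarrow> 'a)" where
  "fscale c v = (\<lambda>i. c * v i)"

definition Fn :: "nat \<Rightarrow> (nat \<Rightarrow> 'a::field) set" where
  "Fn n = {v. \<forall>i\<ge>n. v i = 0}"

definition rank_trivial :: "(nat \<Rightarrow> 'a::field) set \<Rightarrow> nat" where
  "rank_trivial V = 0"

definition rank_free :: "(nat \<Rightarrow> 'a::field) set \<Rightarrow> nat" where
  "rank_free V = Vector_Spaces.vector_space.dim (fscale :: 'a \<Rightarrow> _) V"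

definition equiv_trivial_plus_free ::
  "('a::field \<Rightarrow> 'b::ab_group_add \<Rightarrow> 'b) \<Rightarrow> 'b set \<Rightarrow> ('b set \<Rightarrow> nat) \<Rightarrow> nat \<Rightarrow> nat \<Rightarrow> bool" where
  "equiv_trivial_plus_free sc E \<rho> l f \<longleftrightarrow>
     qequiv sc E \<rho> (sum_scale (fscale :: 'a \<Rightarrow> _) fscale) (Fn l \<times> Fn f)
       (sum_rank fscale rank_trivial fscale rank_free)"

end

theory Submission
  imports Defs "HOL-Library.FuncSet"
begin

(* A subspace V of maximal nullity dim V - \<rho> V, and of least dimension among such subspaces,
   is a cyclic flat: adding a vector raises the dimension, so by maximality it raises the rank;
   dropping a vector from a spanning set lowers the dimension, so by minimality it cannot lower
   the rank. Hence if cl(0) is the only cyclic flat, its nullity dim cl(0) is maximal. Submodularity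
   against cl(0) and Grassmann's formula then give \<rho> V = dim V - dim (V \<inter> cl(0)) for every V,
   which is the rank function of U_{0,l} \<oplus> U_{f,f} once a basis of cl(0), extended to a basis
   of E, is sent to the standard basis of F^l \<times> F^f. Conversely, if \<rho> V = dim V - dim (V \<inter> L)
   for some subspace L, then L is the space of loops, every flat contains L, and every cyclic
   space containing L lies in L (a hyperplane through L missing a vector x shows that x is not in
   the cyclic core), so L = cl(0) is the only cyclic flat. *)

section \<open>Linear algebra in finite subspaces\<close>

lemma obtain_bij_betw_nested:
  assumes "finite B" "finite B'" "C \<subseteq> B" "C' \<subseteq> B'" "card C = card C'" "card B = card B'"
  obtains g where "bij_betw g B B'" "g ` C = C'"
proof -
  have "finite C" "finite C'"
    using assms(1-4) finite_subset by blast+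
  then obtain g1 where g1: "bij_betw g1 C C'"
    using finite_same_card_bij assms(5) by blast
  obtain g2 where g2: "bij_betw g2 (B - C) (B' - C')"
    using finite_same_card_bij assms \<open>finite C\<close> \<open>finite C'\<close>
    by (metis card_Diff_subset finite_Diff)
  define g where "g x = (if x \<in> C then g1 x else g2 x)" for x
  have "bij_betw g C C'" "bij_betw g (B - C) (B' - C')"
    using g1 g2 by (auto simp: g_def intro: bij_betw_cong[THEN iffD1])
  then have "bij_betw g B B'" "g ` C = C'"
    using bij_betw_combine[of g C C' "B - C" "B' - C'"] assms(3,4) Un_Diff_cancel2
    by (auto simp: bij_betw_def Un_absorb1)
  then show ?thesis
    using that by blast
qed

lemma finite_span:
  fixes scale :: "'a::{field,finite} \<Rightarrow> 'b::ab_group_add \<Rightarrow> 'b"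
  assumes "vector_space scale" "finite S"
  shows "finite (module.span scale S)"
proof -
  interpret vector_space scale by fact
  have "span S \<subseteq> (\<lambda>u. \<Sum>v\<in>S. scale (u v) v) ` (S \<rightarrow>\<^sub>E UNIV)"
  proof
    fix x assume "x \<in> span S"
    then obtain u where "x = (\<Sum>v\<in>S. scale (u v) v)"
      using span_finite[OF \<open>finite S\<close>] by blast
    also have "\<dots> = (\<Sum>v\<in>S. scale (restrict u S v) v)"
      by (rule sum.cong) simp_all
    finally show "x \<in> (\<lambda>u. \<Sum>v\<in>S. scale (u v) v) ` (S \<rightarrow>\<^sub>E UNIV)"
      by (rule image_eqI[where x = "restrict u S"]) simp_all
  qed
  moreover have "finite (S \<rightarrow>\<^sub>E (UNIV :: 'a set))"
    using \<open>finite S\<close> by (simp add: finite_PiE)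
  ultimately show ?thesis
    using finite_subset by blast
qed

context vector_space
begin

lemma span_Un_span: "span (A \<union> span B) = span (A \<union> B)"
  by (simp add: span_Un span_span)

lemma dim_mono_finite:
  assumes "S \<subseteq> T" "finite T"
  shows "dim S \<le> dim T"
proof -
  obtain B where B: "B \<subseteq> T" "independent B" "T \<subseteq> span B" "card B = dim T"
    by (rule basis_exists)
  have "S \<subseteq> span B"
    using B(3) assms(1) by blast
  have "finite B"
    using B(1) assms(2) by (rule finite_subset)
  show ?thesis
    using dim_le_card[OF \<open>S \<subseteq> span B\<close> \<open>finite B\<close>] B(4) by simp
qed

lemma dim_insert_finite:
  assumes "finite S"
  shows "dim (insert x S) = (if x \<in> span S then dim S else Suc (dim S))"
proof -
  obtain B where B: "B \<subseteq> S" "independent B" "S \<subseteq> span B" "card B = dim S"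
    by (rule basis_exists)
  have "finite B"
    using B(1) assms by (rule finite_subset)
  have span_B: "span B = span S"
    unfolding span_eq using B(1,3) span_superset by blast
  show ?thesis
  proof (cases "x \<in> span S")
    case True
    then have "dim (insert x S) = dim S"
      by (intro span_eq_dim span_redundant)
    then show ?thesis
      using True by simp
  next
    case False
    then have "x \<notin> span B"
      using span_B by simp
    then have "independent (insert x B)" "x \<notin> B"
      using independent_insertI[OF _ B(2)] span_superset[of B] by auto
    moreover have "span (insert x B) = span (insert x S)"
      using span_B span_Un_span[of "{x}" B] span_Un_span[of "{x}" S] by simp
    ultimately show ?thesis
      using False B \<open>finite B\<close> dim_eq_card[of "insert x B" "insert x S"] by simp
  qed
qed

lemma dim_psubset_finite:
  assumes "subspace S" "S \<subseteq> T" "x \<in> T" "x \<notin> S" "finite T"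
  shows "dim S < dim T"
proof -
  have "finite S"
    using assms(2,5) by (rule finite_subset)
  moreover have "x \<notin> span S"
    using assms(1,4) span_eq_iff by blast
  ultimately have "dim (insert x S) = Suc (dim S)"
    by (simp add: dim_insert_finite)
  moreover have "dim (insert x S) \<le> dim T"
    using assms(2,3,5) by (intro dim_mono_finite) auto
  ultimately show ?thesis
    by simp
qed

lemma span_disjoint:
  assumes "independent B" "A \<subseteq> B" "C \<subseteq> B" "A \<inter> C = {}" "x \<in> span A" "x \<in> span C"
  shows "x = 0"
proof -
  have "representation B x b = 0" for b
  proof (rule ccontr)
    assume "representation B x b \<noteq> 0"
    then have "representation A x b \<noteq> 0" "representation C x b \<noteq> 0"
      using representation_extend[OF assms(1)] assms(2,3,5,6) by metis+
    then have "b \<in> A" "b \<in> C"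
      by (auto dest: representation_ne_zero)
    then show False
      using assms(4) by blast
  qed
  moreover have "x \<in> span B"
    using assms(2,5) span_mono by blast
  ultimately show ?thesis
    using sum_nonzero_representation_eq[OF assms(1)] by force
qed

lemma exists_hyperplane_avoiding:
  assumes "subspace L" "subspace V" "L \<subseteq> V" "x \<in> V" "x \<notin> L"
  obtains W where "subspace W" "L \<subseteq> W" "W \<subseteq> V" "x \<notin> W" "span (insert x W) = V"
proof -
  obtain K where K: "K \<subseteq> L" "independent K" "L \<subseteq> span K" "card K = dim L"
    by (rule basis_exists)
  have span_K: "span K = L"
    using K(1,3) assms(1) by (rule span_subspace)
  then have "independent (insert x K)"
    using K(2) assms(5) by (intro independent_insertI) simp_all
  moreover have "insert x K \<subseteq> V"
    using K(1) assms(3,4) by blast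
  ultimately obtain B where B: "insert x K \<subseteq> B" "B \<subseteq> V" "independent B" "V \<subseteq> span B"
    using maximal_independent_subset_extend by metis
  define W where "W = span (B - {x})"
  have "x \<notin> W"
    unfolding W_def using B(1,3) by (simp add: dependent_def)
  moreover have "L \<subseteq> W"
    unfolding W_def span_K[symmetric] using B(1) K(1) assms(5) by (intro span_mono) blast
  moreover have "W \<subseteq> V"
    unfolding W_def using B(2) assms(2) by (intro span_minimal) auto
  moreover have "span (insert x W) = V"
  proof -
    have "span (insert x W) = span B"
      unfolding W_def using B(1) span_Un_span[of "{x}" "B - {x}"] by (simp add: insert_absorb)
    then show ?thesis
      using B(2,4) assms(2) span_subspace by blast
  qed
  ultimately show ?thesis
    using that unfolding W_def by blast
qed

lemma obtain_nested_bases: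
  assumes "subspace L" "subspace E" "L \<subseteq> E"
  obtains C B where "C \<subseteq> B" "independent B" "span C = L" "span B = E"
proof -
  obtain C where C: "C \<subseteq> L" "independent C" "L \<subseteq> span C"
    using maximal_independent_subset by blast
  obtain B where B: "C \<subseteq> B" "B \<subseteq> E" "independent B" "E \<subseteq> span B"
    using maximal_independent_subset_extend[of C E] C(1,2) assms(3) by (metis order_trans)
  show ?thesis
    using that[OF B(1,3)] span_subspace C B assms(1,2) by blast
qed

end

context vector_space_pair
begin

lemma dim_image_inj:
  assumes "Vector_Spaces.linear s1 s2 h" "inj_on h V" "vs1.subspace V"
  shows "vs2.dim (h ` V) = vs1.dim V"
proof -
  obtain A where A: "A \<subseteq> V" "vs1.independent A" "V \<subseteq> vs1.span A" "card A = vs1.dim V"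
    by (rule vs1.basis_exists)
  have span_A: "vs1.span A = V"
    using A(1,3) assms(3) by (rule vs1.span_subspace)
  then have "h ` V = vs2.span (h ` A)"
    using linear_span_image[OF assms(1)] by blast
  moreover have "vs2.independent (h ` A)"
    using linear_independent_injective_image[OF assms(1) A(2)] assms(2) span_A by simp
  moreover have "card (h ` A) = card A"
    using card_image inj_on_subset[OF assms(2) A(1)] by blast
  ultimately show ?thesis
    using A(4) vs2.dim_span_eq_card_independent by simp
qed

lemma span_image_Diff_kernel:
  assumes "Vector_Spaces.linear s1 s2 h" "\<And>c. c \<in> C \<Longrightarrow> h c = 0"
  shows "vs2.span (h ` (B - C)) = vs2.span (h ` B)"
proof -
  have "h ` B \<subseteq> insert 0 (h ` (B - C))"
    using assms(2) by auto
  also have "\<dots> \<subseteq> vs2.span (h ` (B - C))"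
    using vs2.span_superset[of "h ` (B - C)"] vs2.span_zero[of "h ` (B - C)"] by blast
  finally have "h ` B \<subseteq> vs2.span (h ` (B - C))" .
  moreover have "h ` (B - C) \<subseteq> vs2.span (h ` B)"
    using vs2.span_superset by blast
  ultimately show ?thesis
    unfolding vs2.span_eq by (rule conjI[rotated])
qed

lemma rank_nullity_finite:
  assumes h: "Vector_Spaces.linear s1 s2 h" and X: "vs1.subspace X" "finite X"
  shows "vs1.dim X = vs2.dim (h ` X) + vs1.dim (X \<inter> {x. h x = 0})"
proof -
  let ?K = "X \<inter> {x. h x = 0}"
  obtain C where C: "C \<subseteq> ?K" "vs1.independent C" "?K \<subseteq> vs1.span C" "card C = vs1.dim ?K"
    by (rule vs1.basis_exists)
  obtain B where B: "C \<subseteq> B" "B \<subseteq> X" "vs1.independent B" "X \<subseteq> vs1.span B"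
    using vs1.maximal_independent_subset_extend C(1,2) by (metis le_infE)
  have "finite B"
    using B(2) X(2) by (rule finite_subset)
  have card_B: "card B = vs1.dim X"
    using B(2,4,3) by (rule vs1.basis_card_eq_dim)
  define A where "A = B - C"
  have "h ` X = vs2.span (h ` B)"
    using linear_span_image[OF h] B(2,4) X(1) vs1.span_subspace by metis
  also have "\<dots> = vs2.span (h ` A)"
    unfolding A_def using span_image_Diff_kernel[OF h, of C B] C(1) by blast
  finally have image_X: "h ` X = vs2.span (h ` A)" .
  have "inj_on h (vs1.span A)"
    unfolding linear_inj_on_iff_eq_0[OF h vs1.subspace_span]
  proof (intro ballI impI)
    fix x assume x: "x \<in> vs1.span A" "h x = 0"
    have "x \<in> X"
      using x(1) vs1.span_mono[of A B] B(2,4) X(1) vs1.span_subspace unfolding A_def by blast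
    then have "x \<in> vs1.span C"
      using x(2) C(3) by blast
    then show "x = 0"
      using vs1.span_disjoint[OF B(3), of A C x] x(1) B(1) unfolding A_def by blast
  qed
  moreover have "vs1.independent A"
    using B(3) unfolding A_def by (rule vs1.independent_mono) blast
  ultimately have "vs2.independent (h ` A)" "card (h ` A) = card A"
    using linear_independent_injective_image[OF h] card_image[OF inj_on_subset, OF _ vs1.span_superset]
    by auto
  then have "vs2.dim (h ` X) = card A"
    unfolding image_X by (simp add: vs2.dim_eq_card_independent)
  moreover have "card A = card B - card C"
    unfolding A_def using \<open>finite B\<close> B(1) by (meson card_Diff_subset finite_subset)
  moreover have "card C \<le> card B"
    using \<open>finite B\<close> B(1) by (rule card_mono)
  ultimately show ?thesis
    using card_B C(4) by linarith
qed

lemma linear_extension_of_subspace_hom: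
  assumes S: "vs1.subspace S"
    and add: "\<forall>x\<in>S. \<forall>y\<in>S. \<phi> (x + y) = \<phi> x + \<phi> y"
    and scale: "\<forall>c. \<forall>x\<in>S. \<phi> (s1 c x) = s2 c (\<phi> x)"
  obtains \<psi> where "Vector_Spaces.linear s1 s2 \<psi>" "\<forall>x\<in>S. \<psi> x = \<phi> x"
proof -
  obtain B where B: "B \<subseteq> S" "vs1.independent B" "S \<subseteq> vs1.span B"
    using vs1.maximal_independent_subset by blast
  obtain \<psi> where \<psi>: "Vector_Spaces.linear s1 s2 \<psi>" "\<forall>x\<in>B. \<psi> x = \<phi> x"
    using linear_independent_extend[OF B(2)] by blast
  have "\<phi> 0 = 0"
    using add S vs1.subspace_0 by (metis add_cancel_right_right)
  then have "vs1.subspace {x \<in> S. \<psi> x = \<phi> x}"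
    using S add scale linear_0[OF \<psi>(1)] linear_add[OF \<psi>(1)] linear_scale[OF \<psi>(1)]
    unfolding vs1.subspace_def by simp
  then have "vs1.span B \<subseteq> {x \<in> S. \<psi> x = \<phi> x}"
    using B(1) \<psi>(2) by (intro vs1.span_minimal) auto
  then show ?thesis
    using that[OF \<psi>(1)] B(3) by blast
qed

lemma exists_linear_bij_mapping_subspace:
  assumes L: "vs1.subspace L" "vs1.subspace E" "L \<subseteq> E" "finite E"
    and L': "vs2.subspace L'" "vs2.subspace E'" "L' \<subseteq> E'" "finite E'"
    and dim: "vs1.dim L = vs2.dim L'" "vs1.dim E = vs2.dim E'"
  obtains \<psi> where "Vector_Spaces.linear s1 s2 \<psi>" "bij_betw \<psi> E E'" "\<psi> ` L = L'"
proof -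
  obtain C B where CB: "C \<subseteq> B" "vs1.independent B" "vs1.span C = L" "vs1.span B = E"
    using vs1.obtain_nested_bases[OF L(1-3)] .
  obtain C' B' where CB': "C' \<subseteq> B'" "vs2.independent B'" "vs2.span C' = L'" "vs2.span B' = E'"
    using vs2.obtain_nested_bases[OF L'(1-3)] .
  have fin: "finite B" "finite B'"
    using CB(4) CB'(4) L(4) L'(4) vs1.span_superset vs2.span_superset finite_subset by metis+
  have card_C: "card C = card C'"
    using dim(1) CB CB' vs1.independent_mono vs2.independent_mono
      vs1.dim_span_eq_card_independent vs2.dim_span_eq_card_independent by metis
  have card_B: "card B = card B'"
    using dim(2) CB(2,4) CB'(2,4)
      vs1.dim_span_eq_card_independent vs2.dim_span_eq_card_independent by metis
  obtain g where g: "bij_betw g B B'" "g ` C = C'"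
    using obtain_bij_betw_nested fin CB(1) CB'(1) card_C card_B by metis
  obtain \<psi> where \<psi>: "Vector_Spaces.linear s1 s2 \<psi>" "\<forall>x\<in>B. \<psi> x = g x"
    using linear_independent_extend[OF CB(2)] by blast
  have \<psi>_B: "\<psi> ` B = B'" and \<psi>_C: "\<psi> ` C = C'"
    using g \<psi>(2) CB(1) by (auto simp: bij_betw_def intro!: image_cong)
  have "\<psi> ` E = E'" "\<psi> ` L = L'"
    using linear_span_image[OF \<psi>(1)] CB CB' \<psi>_B \<psi>_C by metis+
  moreover have "inj_on \<psi> E"
    using linear_inj_on_span_independent_image[OF \<psi>(1)] CB(4) CB'(2) \<psi>_B g(1) \<psi>(2)
    by (metis bij_betw_def inj_on_cong)
  ultimately show ?thesis
    using that[OF \<psi>(1)] by (simp add: bij_betw_def)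
qed

end

lemma vector_space_sum_scale:
  assumes "vector_space s1" "vector_space s2"
  shows "vector_space (sum_scale s1 s2)"
proof -
  interpret s1: vector_space s1 by fact
  interpret s2: vector_space s2 by fact
  show ?thesis
  proof
    fix a b :: 'a and x y :: "'b \<times> 'c"
    show "sum_scale s1 s2 a (x + y) = sum_scale s1 s2 a x + sum_scale s1 s2 a y"
      by (simp add: sum_scale_def s1.scale_right_distrib s2.scale_right_distrib)
    show "sum_scale s1 s2 (a + b) x = sum_scale s1 s2 a x + sum_scale s1 s2 b x"
      by (simp add: sum_scale_def s1.scale_left_distrib s2.scale_left_distrib)
    show "sum_scale s1 s2 a (sum_scale s1 s2 b x) = sum_scale s1 s2 (a * b) x"
      by (simp add: sum_scale_def)
    show "sum_scale s1 s2 1 x = x"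
      by (simp add: sum_scale_def)
  qed
qed

context vector_space
begin

lemma subspace_Times:
  assumes "subspace S" "subspace T"
  shows "module.subspace (sum_scale scale scale) (S \<times> T)"
proof -
  interpret P: vector_space "sum_scale scale scale"
    by (rule vector_space_sum_scale) unfold_locales
  show ?thesis
    using assms unfolding subspace_def P.subspace_def by (auto simp: sum_scale_def zero_prod_def)
qed

lemma dim_Times:
  assumes "subspace S" "subspace T" "finite S" "finite T"
  shows "vector_space.dim (sum_scale scale scale) (S \<times> T) = dim S + dim T"
proof -
  interpret P: vector_space_pair "sum_scale scale scale" scale
    unfolding vector_space_pair_def by (auto intro: vector_space_sum_scale vector_space_axioms)
  interpret P': vector_space_pair scale "sum_scale scale scale"
    unfolding vector_space_pair_def by (auto intro: vector_space_sum_scale vector_space_axioms)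
  have lin_fst: "Vector_Spaces.linear (sum_scale scale scale) scale fst"
    unfolding linear_iff by (simp add: sum_scale_def P.vs1.vector_space_axioms vector_space_axioms)
  have lin_Pair: "Vector_Spaces.linear scale (sum_scale scale scale) (Pair 0)"
    unfolding linear_iff by (simp add: sum_scale_def P.vs1.vector_space_axioms vector_space_axioms)
  have "fst ` (S \<times> T) = S"
    using assms(2) subspace_0 by force
  moreover have "(S \<times> T) \<inter> {p. fst p = 0} = Pair 0 ` T"
    using assms(1) subspace_0 by auto
  moreover have "P.vs1.dim (Pair 0 ` T) = dim T"
    using P'.dim_image_inj[OF lin_Pair _ assms(2)] by (simp add: inj_on_def)
  ultimately show ?thesis
    using P.rank_nullity_finite[OF lin_fst subspace_Times[OF assms(1,2)]] assms(3,4) by simp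
qed

(* Rank-nullity for the addition map S \<times> T \<rightarrow> S + T, whose kernel is the antidiagonal over S \<inter> T. *)
lemma dim_span_Un_Int:
  assumes "subspace S" "subspace T" "finite S" "finite T"
  shows "dim (span (S \<union> T)) + dim (S \<inter> T) = dim S + dim T"
proof -
  interpret P: vector_space_pair "sum_scale scale scale" scale
    unfolding vector_space_pair_def by (auto intro: vector_space_sum_scale vector_space_axioms)
  interpret P': vector_space_pair scale "sum_scale scale scale"
    unfolding vector_space_pair_def by (auto intro: vector_space_sum_scale vector_space_axioms)
  have lin_add: "Vector_Spaces.linear (sum_scale scale scale) scale (\<lambda>p. fst p + snd p)"
    unfolding linear_iff
    by (simp add: sum_scale_def P.vs1.vector_space_axioms vector_space_axioms scale_right_distrib)
  have lin_diag: "Vector_Spaces.linear scale (sum_scale scale scale) (\<lambda>x. (x, - x))"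
    unfolding linear_iff by (simp add: sum_scale_def P.vs1.vector_space_axioms vector_space_axioms)
  have span_S: "span S = S" and span_T: "span T = T"
    using assms(1,2) by simp_all
  have "(\<lambda>p. fst p + snd p) ` (S \<times> T) = span (S \<union> T)"
    unfolding span_Un span_S span_T by force
  moreover have "(S \<times> T) \<inter> {p. fst p + snd p = 0} = (\<lambda>x. (x, - x)) ` (S \<inter> T)"
    using assms(1,2) subspace_neg by (force simp: add_eq_0_iff)
  moreover have "P.vs1.dim ((\<lambda>x. (x, - x)) ` (S \<inter> T)) = dim (S \<inter> T)"
    using P'.dim_image_inj[OF lin_diag _ subspace_inter[OF assms(1,2)]] by (simp add: inj_on_def)
  ultimately show ?thesis
    using P.rank_nullity_finite[OF lin_add subspace_Times[OF assms(1,2)]] assms dim_Times by simp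
qed

end

section \<open>The coordinate spaces F^n\<close>

lemma sum_apply: "(\<Sum>x\<in>A. f x) i = (\<Sum>x\<in>A. f x i)"
  by (induction A rule: infinite_finite_induct) auto

lemma vector_space_fscale: "vector_space (fscale :: 'a::field \<Rightarrow> (nat \<Rightarrow> 'a) \<Rightarrow> _)"
  by unfold_locales (auto simp: fscale_def fun_eq_iff algebra_simps)

definition unit_vec :: "nat \<Rightarrow> nat \<Rightarrow> 'a::field" where
  "unit_vec i = (\<lambda>j. of_bool (j = i))"

lemma inj_unit_vec: "inj (unit_vec :: nat \<Rightarrow> nat \<Rightarrow> 'a::field)"
  by (rule injI) (metis unit_vec_def of_bool_eq_1_iff)

lemma sum_mult_unit_vec: "(\<Sum>i<n. f i * unit_vec i j) = (if j < n then f j else 0)"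
proof -
  have "(\<Sum>i<n. f i * unit_vec i j) = (\<Sum>i<n. if i = j then f j else 0)"
    by (intro sum.cong) (auto simp: unit_vec_def)
  then show ?thesis
    by (simp add: sum.delta)
qed

lemma subspace_Fn: "module.subspace (fscale :: 'a::field \<Rightarrow> _) (Fn n)"
proof -
  interpret vector_space "fscale :: 'a \<Rightarrow> _"
    by (rule vector_space_fscale)
  show ?thesis
    unfolding subspace_def by (auto simp: Fn_def fscale_def)
qed

lemma Fn_eq_span: "Fn n = module.span (fscale :: 'a::field \<Rightarrow> _) (unit_vec ` {..<n})"
proof -
  interpret vector_space "fscale :: 'a \<Rightarrow> _"
    by (rule vector_space_fscale)
  show ?thesis
  proof
    show "Fn n \<subseteq> span (unit_vec ` {..<n})"
    proof
      fix v :: "nat \<Rightarrow> 'a" assume "v \<in> Fn n"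
      then have "(\<Sum>i<n. fscale (v i) (unit_vec i)) = v"
        by (auto simp: fun_eq_iff sum_apply fscale_def sum_mult_unit_vec Fn_def not_less)
      moreover have "(\<Sum>i<n. fscale (v i) (unit_vec i)) \<in> span (unit_vec ` {..<n})"
        by (intro span_sum span_scale span_base) simp
      ultimately show "v \<in> span (unit_vec ` {..<n})"
        by simp
    qed
    show "span (unit_vec ` {..<n}) \<subseteq> Fn n"
      using subspace_Fn by (intro span_minimal) (auto simp: Fn_def unit_vec_def)
  qed
qed

lemma independent_unit_vecs:
  "module.independent (fscale :: 'a::field \<Rightarrow> _) (unit_vec ` {..<n})"
proof -
  interpret vector_space "fscale :: 'a \<Rightarrow> _"
    by (rule vector_space_fscale)
  show ?thesis
  proof (rule independent_if_scalars_zero)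
    fix c :: "(nat \<Rightarrow> 'a) \<Rightarrow> 'a" and x :: "nat \<Rightarrow> 'a"
    assume sum: "(\<Sum>x\<in>unit_vec ` {..<n}. fscale (c x) x) = 0" and x: "x \<in> unit_vec ` {..<n}"
    then obtain i where i: "i < n" "x = unit_vec i"
      by blast
    have "0 = (\<Sum>x\<in>unit_vec ` {..<n}. fscale (c x) x) i"
      using sum by simp
    also have "\<dots> = (\<Sum>j<n. c (unit_vec j) * (unit_vec j i :: 'a))"
      by (simp add: sum.reindex inj_on_subset[OF inj_unit_vec] sum_apply fscale_def)
    also have "\<dots> = c x"
      using i by (simp add: sum_mult_unit_vec)
    finally show "c x = 0"
      by simp
  qed simp
qed

lemma dim_Fn: "vector_space.dim (fscale :: 'a::field \<Rightarrow> _) (Fn n) = n"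
proof -
  interpret vector_space "fscale :: 'a \<Rightarrow> _"
    by (rule vector_space_fscale)
  have "dim (Fn n) = card (unit_vec ` {..<n} :: (nat \<Rightarrow> 'a) set)"
    unfolding Fn_eq_span by (rule dim_span_eq_card_independent[OF independent_unit_vecs])
  also have "\<dots> = n"
    using card_image[OF inj_on_subset[OF inj_unit_vec[where 'a = 'a] subset_UNIV]] by simp
  finally show ?thesis .
qed

lemma finite_Fn: "finite (Fn n :: (nat \<Rightarrow> 'a::{field,finite}) set)"
  unfolding Fn_eq_span by (intro finite_span vector_space_fscale) simp

lemma Fn_0: "Fn 0 = {0}"
  by (auto simp: Fn_def fun_eq_iff)

lemma dim_Fn_Times:
  "vector_space.dim (sum_scale fscale fscale) (Fn a \<times> Fn b :: ((nat \<Rightarrow> 'a::{field,finite}) \<times> _) set) =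
    a + b"
proof -
  interpret F: vector_space "fscale :: 'a \<Rightarrow> _"
    by (rule vector_space_fscale)
  show ?thesis
    unfolding F.dim_Times[OF subspace_Fn subspace_Fn finite_Fn finite_Fn] dim_Fn ..
qed

section \<open>The rank function of a trivial plus a free q-matroid\<close>

lemma subspace_snd_zero:
  assumes "vector_space s1" "vector_space s2"
  shows "module.subspace (sum_scale s1 s2) {p. snd p = 0}"
proof -
  interpret P: vector_space "sum_scale s1 s2"
    using assms by (rule vector_space_sum_scale)
  interpret s2: vector_space s2
    by fact
  show ?thesis
    unfolding P.subspace_def by (simp add: sum_scale_def zero_prod_def)
qed

(* By rank-nullity for snd, the quantity minimised in sum_rank is -dim (X \<inter> ker snd), which is
   least at X = W. *)
lemma sum_rank_trivial_free:
  assumes "vector_space s1" "vector_space s2"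
    and W: "module.subspace (sum_scale s1 s2) W" "finite W"
  shows "sum_rank s1 (\<lambda>_. 0) s2 (vector_space.dim s2) W =
    vector_space.dim (sum_scale s1 s2) W - vector_space.dim (sum_scale s1 s2) (W \<inter> {p. snd p = 0})"
proof -
  interpret P: vector_space_pair "sum_scale s1 s2" s2
    unfolding vector_space_pair_def using assms(1,2) vector_space_sum_scale by blast
  let ?K = "{p :: 'b \<times> 'c. snd p = 0}"
  let ?S = "{X. P.vs1.subspace X \<and> X \<subseteq> W}"
  let ?g = "\<lambda>X. int 0 + int (P.vs2.dim (snd ` X)) - int (P.vs1.dim X)"
  have lin_snd: "Vector_Spaces.linear (sum_scale s1 s2) s2 snd"
    unfolding linear_iff using assms(1,2) P.vs1.vector_space_axioms by (simp add: sum_scale_def)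
  have g: "?g X = - int (P.vs1.dim (X \<inter> ?K))" if "X \<in> ?S" for X
    using P.rank_nullity_finite[OF lin_snd, of X] that finite_subset[OF _ W(2)] by simp
  have "Min (?g ` ?S) = - int (P.vs1.dim (W \<inter> ?K))"
  proof (rule Min_eqI)
    show "finite (?g ` ?S)"
      using W(2) by simp
    show "- int (P.vs1.dim (W \<inter> ?K)) \<in> ?g ` ?S"
      using g[of W] W(1) by (intro image_eqI[of _ _ W]) auto
  next
    fix y assume "y \<in> ?g ` ?S"
    then obtain X where X: "X \<in> ?S" "y = ?g X"
      by blast
    have "P.vs1.dim (X \<inter> ?K) \<le> P.vs1.dim (W \<inter> ?K)"
      using X(1) W(2) by (intro P.vs1.dim_mono_finite) auto
    then show "- int (P.vs1.dim (W \<inter> ?K)) \<le> y"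
      using X g by simp
  qed
  moreover have "P.vs1.dim (W \<inter> ?K) \<le> P.vs1.dim W"
    using W(2) by (intro P.vs1.dim_mono_finite) auto
  ultimately show ?thesis
    unfolding sum_rank_def by simp
qed

context vector_space
begin

lemma sum_rank_trivial_free_image:
  assumes "vector_space s1" "vector_space s2" and \<psi>: "Vector_Spaces.linear scale (sum_scale s1 s2) \<psi>"
    and V: "inj_on \<psi> V" "subspace V" "finite V"
  shows "sum_rank s1 (\<lambda>_. 0) s2 (vector_space.dim s2) (\<psi> ` V) =
    dim V - dim (V \<inter> {x. snd (\<psi> x) = 0})"
proof -
  interpret P: vector_space_pair scale "sum_scale s1 s2"
    unfolding vector_space_pair_def using assms(1,2) vector_space_sum_scale vector_space_axioms
    by blast
  let ?N = "V \<inter> {x. snd (\<psi> x) = 0}"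
  have "P.vs2.subspace {p. snd p = 0}"
    using subspace_snd_zero[OF assms(1,2)] .
  then have "subspace (\<psi> -` {p. snd p = 0})"
    by (rule P.linear_subspace_vimage[OF \<psi>])
  then have "subspace ?N"
    using subspace_inter[OF V(2)] by (simp add: vimage_def)
  have "\<psi> ` V \<inter> {p. snd p = 0} = \<psi> ` ?N"
    by auto
  moreover have "P.vs2.dim (\<psi> ` V) = dim V"
    using P.dim_image_inj[OF \<psi> V(1,2)] .
  moreover have "P.vs2.dim (\<psi> ` ?N) = dim ?N"
    using P.dim_image_inj[OF \<psi> inj_on_subset[OF V(1) Int_lower1] \<open>subspace ?N\<close>] .
  ultimately show ?thesis
    using sum_rank_trivial_free[OF assms(1,2) P.linear_subspace_image[OF \<psi> V(2)]] V(3) by simp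
qed

end

lemma vimage_snd_zero_eq:
  assumes "inj_on \<psi> E" "\<psi> ` E \<subseteq> A \<times> B" "L \<subseteq> E" "\<psi> ` L = A \<times> {0}"
  shows "E \<inter> {x. snd (\<psi> x) = 0} = L"
proof
  have "snd (\<psi> x) = 0" if "x \<in> L" for x
    using imageI[OF that, of \<psi>] unfolding assms(4) by auto
  then show "L \<subseteq> E \<inter> {x. snd (\<psi> x) = 0}"
    using assms(3) by auto
  show "E \<inter> {x. snd (\<psi> x) = 0} \<subseteq> L"
  proof
    fix x assume x: "x \<in> E \<inter> {x. snd (\<psi> x) = 0}"
    then have "\<psi> x \<in> \<psi> ` L"
      using assms(2,4) by (cases "\<psi> x") auto
    then obtain y where "y \<in> L" "\<psi> y = \<psi> x"
      by (metis imageE)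
    then show "x \<in> L"
      using inj_onD[OF assms(1)] x assms(3) by blast
  qed
qed

lemma sum_rank_trivial_free_unfold:
  "sum_rank fscale rank_trivial fscale rank_free =
    sum_rank fscale (\<lambda>_. 0) fscale (vector_space.dim (fscale :: 'a::field \<Rightarrow> _))"
  by (simp add: rank_trivial_def[abs_def] rank_free_def[abs_def])

section \<open>Nullity, loops and cyclic flats of a q-matroid\<close>

locale q_matroid = vector_space sc for sc :: "'a::{field,finite} \<Rightarrow> 'b::ab_group_add \<Rightarrow> 'b" +
  fixes E :: "'b set" and \<rho> :: "'b set \<Rightarrow> nat"
  assumes qmatroid: "qmatroid sc E \<rho>"
begin

abbreviation subE :: "'b set \<Rightarrow> bool" where
  "subE V \<equiv> subspace V \<and> V \<subseteq> E"

lemma subsp_iff: "subsp sc E V \<longleftrightarrow> subE V"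
  by (simp add: subsp_def)

lemma subspace_E: "subspace E"
  using qmatroid by (simp add: qmatroid_def ground_space_def)

lemma finite_E: "finite E"
proof -
  obtain B where "finite B" "span B = E"
    using qmatroid by (auto simp: qmatroid_def ground_space_def)
  then show ?thesis
    using finite_span[OF vector_space_axioms] by metis
qed

lemma subE_finite: "subE V \<Longrightarrow> finite V"
  using finite_E finite_subset by blast

lemma rank_le_dim: "subE V \<Longrightarrow> \<rho> V \<le> dim V"
  using qmatroid by (simp add: qmatroid_def subsp_iff)

lemma rank_mono: "subE V \<Longrightarrow> subE W \<Longrightarrow> V \<subseteq> W \<Longrightarrow> \<rho> V \<le> \<rho> W"
  using qmatroid by (simp add: qmatroid_def subsp_iff)

lemma rank_submod: "subE V \<Longrightarrow> subE W \<Longrightarrow> \<rho> (span (V \<union> W)) + \<rho> (V \<inter> W) \<le> \<rho> V + \<rho> W"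
  using qmatroid by (simp add: qmatroid_def subsp_iff)

lemma subE_span: "A \<subseteq> E \<Longrightarrow> subE (span A)"
  using span_minimal[OF _ subspace_E] by simp

lemma subE_span_Un: "subE V \<Longrightarrow> subE W \<Longrightarrow> subE (span (V \<union> W))"
  by (simp add: subE_span)

lemma subE_Int: "subE V \<Longrightarrow> subE W \<Longrightarrow> subE (V \<inter> W)"
  using subspace_inter by blast

lemma rank_zero_space: "\<rho> {0} = 0"
proof -
  have "subE {0}"
    using subspace_E subspace_0 by auto
  moreover have "dim {0} = 0"
    using dim_span[of "{}"] dim_eq_card_independent[OF independent_empty] by simp
  ultimately show ?thesis
    using rank_le_dim by fastforce
qed

lemma rank_span_Un_le: "subE V \<Longrightarrow> subE W \<Longrightarrow> \<rho> (span (V \<union> W)) \<le> \<rho> V + \<rho> W"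
  using rank_submod by fastforce

lemma rank_span_insert_le:
  assumes "subE V" "x \<in> E"
  shows "\<rho> (span (V \<union> span {x})) \<le> \<rho> V + 1"
proof -
  have "subE (span {x})"
    using assms(2) by (simp add: subE_span)
  moreover have "dim (span {x}) \<le> 1"
    using dim_le_card'[of "{x}"] by simp
  ultimately show ?thesis
    using rank_span_Un_le[OF assms(1)] rank_le_dim by fastforce
qed

lemma dim_span_insert:
  assumes "subE V" "x \<notin> V"
  shows "dim (span (V \<union> span {x})) = Suc (dim V)"
proof -
  have "span (V \<union> span {x}) = span (insert x V)"
    using span_Un_span[of V "{x}"] by simp
  moreover have "x \<notin> span V"
    using assms span_eq_iff by blast
  ultimately show ?thesis
    using dim_insert_finite[OF subE_finite[OF assms(1)]] by simp
qed

lemma dim_span_insert_le: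
  assumes "subE V"
  shows "dim (span (V \<union> span {x})) \<le> Suc (dim V)"
proof -
  have "span (V \<union> span {x}) = span (insert x V)"
    using span_Un_span[of V "{x}"] by simp
  then show ?thesis
    using dim_insert_finite[OF subE_finite[OF assms(1)], of x] by simp
qed

definition nullity :: "'b set \<Rightarrow> nat" where
  "nullity V = dim V - \<rho> V"

lemma nullity_add_rank: "subE V \<Longrightarrow> nullity V + \<rho> V = dim V"
  using rank_le_dim by (simp add: nullity_def)

lemma nullity_mono:
  assumes "subE V" "subE W" "V \<subseteq> W"
  shows "nullity V \<le> nullity W"
  using assms
proof (induction "dim W - dim V" arbitrary: V rule: less_induct)
  case less
  show ?case
  proof (cases "V = W")
    case False
    then obtain x where x: "x \<in> W" "x \<notin> V"
      using less.prems(3) by blast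
    define V' where "V' = span (V \<union> span {x})"
    have "subE V'" "V' \<subseteq> W"
      unfolding V'_def using less.prems x span_minimal[of "V \<union> span {x}" W]
        span_minimal[of "{x}" W] by (auto simp: subE_span)
    have dim_V': "dim V' = Suc (dim V)"
      unfolding V'_def using less.prems(1) x(2) by (rule dim_span_insert)
    have "\<rho> V' \<le> \<rho> V + 1"
      unfolding V'_def using less.prems x by (intro rank_span_insert_le) auto
    then have "nullity V \<le> nullity V'"
      using nullity_add_rank[OF less.prems(1)] nullity_add_rank[OF \<open>subE V'\<close>] dim_V' by linarith
    moreover have "nullity V' \<le> nullity W"
      using dim_V' dim_mono_finite[OF \<open>V' \<subseteq> W\<close> subE_finite[OF less.prems(2)]]
      by (intro less.hyps[OF _ \<open>subE V'\<close> less.prems(2) \<open>V' \<subseteq> W\<close>]) linarith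
    ultimately show ?thesis
      by simp
  qed simp
qed

definition loops :: "'b set" where
  "loops = {x \<in> E. \<rho> (span {x}) = 0}"

lemma loops_subset_E: "loops \<subseteq> E"
  by (auto simp: loops_def)

lemma subE_span_loops: "subE (span loops)"
  using loops_subset_E by (rule subE_span)

lemma loop_space_eq_span_loops: "qcl sc E \<rho> {0} = span loops"
proof -
  let ?U = "\<Union>{span {x} | x. x \<in> E \<and> \<rho> (span ({0} \<union> span {x})) = \<rho> {0}}"
  have span_0_x: "span ({0} \<union> span {x}) = span {x}" for x
    using span_zero[of "{x}"] by (simp add: insert_absorb span_span)
  have "loops \<subseteq> ?U"
  proof
    fix x assume "x \<in> loops"
    then have "span {x} \<subseteq> ?U"
      unfolding loops_def span_0_x rank_zero_space by blast
    then show "x \<in> ?U"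
      using span_base[of x "{x}"] by blast
  qed
  moreover have "?U \<subseteq> span loops"
  proof
    fix y assume "y \<in> ?U"
    then obtain x where "x \<in> loops" "y \<in> span {x}"
      unfolding loops_def span_0_x rank_zero_space by blast
    then show "y \<in> span loops"
      using span_mono[of "{x}" loops] by blast
  qed
  ultimately have "span ?U = span loops"
    unfolding span_eq using span_superset by blast
  then show ?thesis
    by (simp add: qcl_def)
qed

lemma rank_span_loops: "\<rho> (span loops) = 0"
proof -
  have "\<rho> (span A) = 0" if "finite A" "A \<subseteq> loops" for A
    using that
  proof (induction A rule: finite_induct)
    case empty
    then show ?case
      using rank_zero_space by simp
  next
    case (insert a A)
    have "span (span A \<union> span {a}) = span (insert a A)"
      using span_Un_span[of "span A" "{a}"] span_Un_span[of "{a}" A]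
      by (simp add: Un_commute[of "span A"])
    moreover have "\<rho> (span (span A \<union> span {a})) \<le> \<rho> (span A) + \<rho> (span {a})"
      using insert.prems by (intro rank_span_Un_le subE_span) (auto simp: loops_def)
    moreover have "\<rho> (span A) = 0"
      using insert.IH insert.prems by simp
    moreover have "\<rho> (span {a}) = 0"
      using insert.prems by (simp add: loops_def)
    ultimately show ?case
      by (metis add.right_neutral le_zero_eq)
  qed
  then show ?thesis
    using finite_subset[OF loops_subset_E finite_E] by blast
qed

end

lemma q_matroid_if_qmatroid:
  assumes "qmatroid sc E \<rho>"
  shows "q_matroid sc E \<rho>"
proof -
  have "vector_space sc"
    using assms by (simp add: qmatroid_def ground_space_def)
  then show ?thesis
    using assms by (intro q_matroid.intro q_matroid_axioms.intro)
qed

context q_matroid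
begin

lemma cyclic_if_rank_zero:
  assumes "subE V" "\<rho> V = 0"
  shows "qcyclic sc \<rho> V"
proof -
  have "\<rho> W = \<rho> V" if "subspace W" "W \<subseteq> V" for W
    using rank_mono[of W V] assms that by auto
  then show ?thesis
    unfolding qcyclic_def qcyc_def by blast
qed

lemma loop_space_cyclic_flat: "qcl sc E \<rho> {0} \<in> cyclic_flats sc E \<rho>"
proof -
  have "\<rho> (span (span loops \<union> span {x})) > 0" if "x \<in> E - span loops" for x
  proof (rule ccontr)
    have "span {x} \<subseteq> span (span loops \<union> span {x})"
      using span_superset[of "span loops \<union> span {x}"] by blast
    then have "\<rho> (span {x}) \<le> \<rho> (span (span loops \<union> span {x}))"
      using that subE_span_loops loops_subset_E by (intro rank_mono subE_span_Un subE_span) auto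
    moreover assume "\<not> ?thesis"
    ultimately have "x \<in> loops"
      using that by (simp add: loops_def)
    then show False
      using that span_base by blast
  qed
  then have "qflat sc E \<rho> (span loops)"
    unfolding qflat_def subsp_iff using subE_span_loops rank_span_loops by simp
  then show ?thesis
    unfolding cyclic_flats_def loop_space_eq_span_loops
    using cyclic_if_rank_zero[OF subE_span_loops rank_span_loops] by blast
qed

lemma flat_if_max_nullity:
  assumes "subE V" "nullity V = nullity E"
  shows "qflat sc E \<rho> V"
  unfolding qflat_def subsp_iff
proof (intro conjI assms(1)[THEN conjunct1] assms(1)[THEN conjunct2] ballI)
  fix x assume x: "x \<in> E - V"
  define V' where "V' = span (V \<union> span {x})"
  have "subE V'"
    unfolding V'_def using assms(1) x by (simp add: subE_span)
  have "dim V' = Suc (dim V)"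
    unfolding V'_def using assms(1) x by (intro dim_span_insert) auto
  moreover have "nullity V' \<le> nullity V"
    using nullity_mono[OF \<open>subE V'\<close>, of E] subspace_E \<open>subE V'\<close> assms(2) by simp
  ultimately have "\<rho> V < \<rho> V'"
    using nullity_add_rank[OF assms(1)] nullity_add_rank[OF \<open>subE V'\<close>] by linarith
  then show "\<rho> V < \<rho> (span (V \<union> span {x}))"
    by (simp add: V'_def)
qed

lemma cyclic_if_minimal_max_nullity:
  assumes "subE V" "nullity V = nullity E"
    and minimal: "\<And>W. subE W \<Longrightarrow> W \<subset> V \<Longrightarrow> nullity W < nullity E"
  shows "qcyclic sc \<rho> V"
proof -
  have "\<rho> W = \<rho> V"
    if x: "x \<in> V" and W: "subspace W" "W \<subseteq> V" "span (W \<union> span {x}) = V" for x W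
  proof (cases "W = V")
    case False
    have "subE W"
      using W assms(1) by blast
    then have "nullity W < nullity V"
      using minimal W(2) False assms(2) by auto
    moreover have "dim V \<le> Suc (dim W)"
      using dim_span_insert_le[OF \<open>subE W\<close>, of x] W(3) by simp
    moreover have "\<rho> W \<le> \<rho> V"
      using rank_mono \<open>subE W\<close> assms(1) W(2) by blast
    ultimately show ?thesis
      using nullity_add_rank[OF assms(1)] nullity_add_rank[OF \<open>subE W\<close>] by linarith
  qed simp
  then show ?thesis
    unfolding qcyclic_def qcyc_def by blast
qed

lemma exists_cyclic_flat_max_nullity:
  obtains V where "V \<in> cyclic_flats sc E \<rho>" "nullity V = nullity E"
proof -
  define P where "P V \<longleftrightarrow> subE V \<and> nullity V = nullity E" for V
  have "P E"
    unfolding P_def using subspace_E by blast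
  then obtain V where V: "P V" and least: "\<And>W. P W \<Longrightarrow> dim V \<le> dim W"
    using ex_has_least_nat[of P E dim] by blast
  have "nullity W < nullity E" if W: "subE W" "W \<subset> V" for W
  proof -
    obtain x where "x \<in> V" "x \<notin> W"
      using W(2) by blast
    then have "dim W < dim V"
      using dim_psubset_finite[of W V x] W V subE_finite unfolding P_def by blast
    then have "\<not> P W"
      using least by fastforce
    moreover have "nullity W \<le> nullity E"
      using nullity_mono[OF W(1), of E] W(1) subspace_E by blast
    ultimately show ?thesis
      using W(1) unfolding P_def by simp
  qed
  then have "V \<in> cyclic_flats sc E \<rho>"
    using V flat_if_max_nullity cyclic_if_minimal_max_nullity
    unfolding P_def cyclic_flats_def by simp
  then show ?thesis
    using that V unfolding P_def by blast
qed

end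

section \<open>Rank functions that are free modulo a subspace\<close>

context q_matroid
begin

(* \<rho> V = dim ((V + L) / L): the rank function of U_{0,l} \<oplus> U_{f,f}, with L in the role of the
   trivial summand. *)
definition free_modulo :: "'b set \<Rightarrow> bool" where
  "free_modulo L \<longleftrightarrow> subE L \<and> (\<forall>V. subE V \<longrightarrow> \<rho> V = dim V - dim (V \<inter> L))"

lemma free_modulo_if_max_nullity:
  assumes L: "subE L" "\<rho> L = 0" "nullity L = nullity E"
  shows "free_modulo L"
  unfolding free_modulo_def
proof (intro conjI L(1)[THEN conjunct1] L(1)[THEN conjunct2] allI impI)
  fix W assume W: "subE W"
  have "subE (W \<inter> L)"
    using W L(1) by (rule subE_Int)
  have "\<rho> (W \<inter> L) = 0"
    using rank_mono[OF \<open>subE (W \<inter> L)\<close> L(1)] L(2) by simp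
  then have "dim (W \<inter> L) + \<rho> W \<le> dim W"
    using nullity_mono[OF \<open>subE (W \<inter> L)\<close> W Int_lower1] nullity_add_rank[OF W]
      nullity_add_rank[OF \<open>subE (W \<inter> L)\<close>] by linarith
  txt \<open>Submodularity against L gives \<rho> W \<ge> \<rho> (W + L); maximality of the nullity of L gives
    \<rho> (W + L) \<ge> dim (W + L) - dim L, which Grassmann's formula rewrites.\<close>
  define T where "T = span (W \<union> L)"
  have "subE T"
    unfolding T_def using W L(1) by (rule subE_span_Un)
  have "nullity T \<le> nullity E"
    using nullity_mono[OF \<open>subE T\<close>, of E] subspace_E \<open>subE T\<close> by blast
  then have "dim T \<le> \<rho> T + dim L"
    using nullity_add_rank[OF \<open>subE T\<close>] nullity_add_rank[OF L(1)] L(2,3) by linarith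
  moreover have "\<rho> T \<le> \<rho> W"
    unfolding T_def using rank_submod[OF W L(1)] L(2) by linarith
  moreover have "dim T + dim (W \<inter> L) = dim W + dim L"
    unfolding T_def using W L(1) subE_finite[OF W] subE_finite[OF L(1)]
    by (intro dim_span_Un_Int) simp_all
  ultimately show "\<rho> W = dim W - dim (W \<inter> L)"
    using \<open>dim (W \<inter> L) + \<rho> W \<le> dim W\<close> by linarith
qed

lemma free_modulo_loop_space:
  assumes "cyclic_flats sc E \<rho> = {qcl sc E \<rho> {0}}"
  shows "free_modulo (qcl sc E \<rho> {0})"
proof -
  obtain V where "V \<in> cyclic_flats sc E \<rho>" "nullity V = nullity E"
    by (rule exists_cyclic_flat_max_nullity)
  then have "nullity (span loops) = nullity E"
    using assms loop_space_eq_span_loops by simp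
  then show ?thesis
    unfolding loop_space_eq_span_loops
    using subE_span_loops rank_span_loops by (intro free_modulo_if_max_nullity)
qed

lemma loops_eq_if_free_modulo:
  assumes "free_modulo L"
  shows "loops = L"
proof -
  have L: "subE L" and rank: "\<And>V. subE V \<Longrightarrow> \<rho> V = dim V - dim (V \<inter> L)"
    using assms unfolding free_modulo_def by blast+
  have "\<rho> (span {x}) = 0 \<longleftrightarrow> x \<in> L" if "x \<in> E" for x
  proof
    have sub: "subE (span {x})"
      using that by (simp add: subE_span)
    assume "\<rho> (span {x}) = 0"
    show "x \<in> L"
    proof (rule ccontr)
      assume "x \<notin> L"
      then have "dim (span {x} \<inter> L) < dim (span {x})"
        using sub L subE_finite[OF sub]
        by (intro dim_psubset_finite[of _ _ x]) (auto intro: subspace_inter span_base)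
      then show False
        using \<open>\<rho> (span {x}) = 0\<close> rank[OF sub] by simp
    qed
  next
    assume "x \<in> L"
    then have "span {x} \<inter> L = span {x}"
      using L span_minimal[of "{x}" L] by blast
    then show "\<rho> (span {x}) = 0"
      using rank[of "span {x}"] that by (simp add: subE_span)
  qed
  then show ?thesis
    using L unfolding loops_def by blast
qed

lemma loop_space_if_free_modulo:
  assumes "free_modulo L"
  shows "qcl sc E \<rho> {0} = L"
proof -
  have "subspace L"
    using assms unfolding free_modulo_def by blast
  then show ?thesis
    using loop_space_eq_span_loops loops_eq_if_free_modulo[OF assms] by simp
qed

lemma free_modulo_subset_flat:
  assumes "free_modulo L" "qflat sc E \<rho> V"
  shows "L \<subseteq> V"
proof
  have L: "subE L" and rank: "\<And>V. subE V \<Longrightarrow> \<rho> V = dim V - dim (V \<inter> L)"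
    using assms(1) unfolding free_modulo_def by blast+
  have V: "subE V"
    using assms(2) unfolding qflat_def subsp_iff by blast
  fix x assume "x \<in> L"
  show "x \<in> V"
  proof (rule ccontr)
    assume "x \<notin> V"
    define V' where "V' = span (V \<union> span {x})"
    have "x \<in> E"
      using \<open>x \<in> L\<close> L by blast
    then have "subE V'"
      unfolding V'_def using V by (simp add: subE_span)
    have "\<rho> V < \<rho> V'"
      unfolding V'_def using assms(2) \<open>x \<in> E\<close> \<open>x \<notin> V\<close> by (simp add: qflat_def)
    moreover have "dim V' = Suc (dim V)"
      unfolding V'_def using V \<open>x \<notin> V\<close> by (rule dim_span_insert)
    moreover have "dim (V \<inter> L) < dim (V' \<inter> L)"
    proof (rule dim_psubset_finite[of _ _ x])
      show "V \<inter> L \<subseteq> V' \<inter> L"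
        unfolding V'_def using span_superset[of "V \<union> span {x}"] by blast
      show "x \<in> V' \<inter> L"
        unfolding V'_def using \<open>x \<in> L\<close> span_superset[of "V \<union> span {x}"] span_base[of x "{x}"]
        by blast
    qed (use V L \<open>x \<notin> V\<close> subE_finite[OF \<open>subE V'\<close>] subspace_inter in auto)
    moreover have "dim (V' \<inter> L) \<le> dim V'"
      using subE_finite[OF \<open>subE V'\<close>] by (intro dim_mono_finite) auto
    ultimately show False
      using rank[OF V] rank[OF \<open>subE V'\<close>] by linarith
  qed
qed

lemma free_modulo_cyclic_subset:
  assumes "free_modulo L" "subE V" "L \<subseteq> V" "qcyclic sc \<rho> V"
  shows "V \<subseteq> L"
proof
  have L: "subE L" and rank: "\<And>V. subE V \<Longrightarrow> \<rho> V = dim V - dim (V \<inter> L)"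
    using assms(1) unfolding free_modulo_def by blast+
  fix x assume "x \<in> V"
  show "x \<in> L"
  proof (rule ccontr)
    assume "x \<notin> L"
    then obtain W where W: "subspace W" "L \<subseteq> W" "W \<subseteq> V" "x \<notin> W" "span (insert x W) = V"
      using exists_hyperplane_avoiding L assms(2,3) \<open>x \<in> V\<close> by metis
    have "subE W"
      using W(1,3) assms(2) by blast
    have span_W_x: "span (W \<union> span {x}) = V"
      using W(5) span_Un_span[of W "{x}"] by simp
    then have "\<rho> W = \<rho> V"
      using assms(4) \<open>x \<in> V\<close> W(1,3) unfolding qcyclic_def qcyc_def by blast
    moreover have "dim V = Suc (dim W)"
      using dim_span_insert[OF \<open>subE W\<close> W(4)] span_W_x by simp
    moreover have "dim L \<le> dim W"
      using W(2) subE_finite[OF \<open>subE W\<close>] by (rule dim_mono_finite)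
    ultimately show False
      using rank[OF \<open>subE W\<close>] rank[OF assms(2)] W(2) assms(3) by (simp add: Int_absorb1)
  qed
qed

lemma cyclic_flats_if_free_modulo:
  assumes "free_modulo L"
  shows "cyclic_flats sc E \<rho> = {qcl sc E \<rho> {0}}"
proof -
  have "V = L" if "V \<in> cyclic_flats sc E \<rho>" for V
  proof -
    have "qflat sc E \<rho> V" "qcyclic sc \<rho> V"
      using that unfolding cyclic_flats_def by blast+
    moreover have "subE V"
      using \<open>qflat sc E \<rho> V\<close> unfolding qflat_def subsp_iff by blast
    ultimately show ?thesis
      using free_modulo_subset_flat free_modulo_cyclic_subset assms by blast
  qed
  then show ?thesis
    using loop_space_cyclic_flat loop_space_if_free_modulo[OF assms] by blast
qed

end

section \<open>Equivalence with a trivial plus a free q-matroid\<close>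

context q_matroid
begin

lemma sum_rank_trivial_free_linear_image:
  assumes "Vector_Spaces.linear sc (sum_scale fscale fscale) \<psi>" "inj_on \<psi> E" "subE V"
  shows "sum_rank fscale rank_trivial fscale rank_free (\<psi> ` V) =
    dim V - dim (V \<inter> {x. snd (\<psi> x) = 0})"
  unfolding sum_rank_trivial_free_unfold
  using sum_rank_trivial_free_image[OF vector_space_fscale vector_space_fscale assms(1)]
    inj_on_subset[OF assms(2)] assms(3) subE_finite by blast

(* qequiv only asks the map to be additive and homogeneous on E; it extends to a linear map of the
   whole space. *)
lemma equiv_trivial_plus_free_iff:
  "equiv_trivial_plus_free sc E \<rho> l f \<longleftrightarrow>
    (\<exists>\<psi>. Vector_Spaces.linear sc (sum_scale fscale fscale) \<psi> \<and> bij_betw \<psi> E (Fn l \<times> Fn f) \<and>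
      (\<forall>V. subE V \<longrightarrow> sum_rank fscale rank_trivial fscale rank_free (\<psi> ` V) = \<rho> V))"
    (is "_ \<longleftrightarrow> (\<exists>\<psi>. ?linear \<psi> \<and> ?bij \<psi> \<and> ?rank \<psi>)")
proof
  interpret P: vector_space_pair sc "sum_scale (fscale :: 'a \<Rightarrow> _) fscale"
    unfolding vector_space_pair_def
    using vector_space_axioms vector_space_sum_scale vector_space_fscale by blast
  assume "equiv_trivial_plus_free sc E \<rho> l f"
  then obtain \<phi> where "?bij \<phi>" "?rank \<phi>"
    and add: "\<forall>x\<in>E. \<forall>y\<in>E. \<phi> (x + y) = \<phi> x + \<phi> y"
    and scale: "\<forall>c. \<forall>x\<in>E. \<phi> (sc c x) = sum_scale fscale fscale c (\<phi> x)"
    unfolding equiv_trivial_plus_free_def qequiv_def subsp_iff by blast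
  moreover obtain \<psi> where "?linear \<psi>" and \<psi>: "\<forall>x\<in>E. \<psi> x = \<phi> x"
    using P.linear_extension_of_subspace_hom[OF subspace_E add scale] by blast
  moreover have "\<psi> ` V = \<phi> ` V" if "V \<subseteq> E" for V
    by (rule image_cong[OF refl]) (use \<psi> that in auto)
  ultimately have "?linear \<psi> \<and> ?bij \<psi> \<and> ?rank \<psi>"
    using bij_betw_cong[of E \<psi> \<phi>] by simp
  then show "\<exists>\<psi>. ?linear \<psi> \<and> ?bij \<psi> \<and> ?rank \<psi>"
    by blast
next
  assume "\<exists>\<psi>. ?linear \<psi> \<and> ?bij \<psi> \<and> ?rank \<psi>"
  then show "equiv_trivial_plus_free sc E \<rho> l f"
    unfolding equiv_trivial_plus_free_def qequiv_def subsp_iff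
    using linear_iff by blast
qed

lemma exists_linear_bij_with_kernel:
  assumes L: "subE L"
  obtains \<psi> where "Vector_Spaces.linear sc (sum_scale fscale fscale) \<psi>"
    "bij_betw \<psi> E (Fn (dim L) \<times> Fn (dim E - dim L))" "E \<inter> {x. snd (\<psi> x) = 0} = L"
proof -
  interpret F: vector_space "fscale :: 'a \<Rightarrow> _"
    by (rule vector_space_fscale)
  interpret P: vector_space_pair sc "sum_scale (fscale :: 'a \<Rightarrow> _) fscale"
    unfolding vector_space_pair_def
    using vector_space_axioms vector_space_sum_scale vector_space_fscale by blast
  define l f where "l = dim L" and "f = dim E - dim L"
  have "dim L \<le> dim E"
    using L subE_finite subspace_E by (intro dim_mono_finite) auto
  then have dims: "P.vs2.dim (Fn l \<times> Fn 0) = dim L" "P.vs2.dim (Fn l \<times> Fn f) = dim E"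
    unfolding l_def f_def dim_Fn_Times by simp_all
  have sub: "P.vs2.subspace (Fn l \<times> Fn 0)" "P.vs2.subspace (Fn l \<times> Fn f)"
    using F.subspace_Times subspace_Fn by blast+
  have "Fn l \<times> Fn 0 \<subseteq> (Fn l \<times> Fn f :: ((nat \<Rightarrow> 'a) \<times> (nat \<Rightarrow> 'a)) set)"
    by (auto simp: Fn_0 Fn_def)
  moreover have "finite (Fn l \<times> Fn f :: ((nat \<Rightarrow> 'a) \<times> (nat \<Rightarrow> 'a)) set)"
    using finite_cartesian_product[OF finite_Fn finite_Fn] .
  ultimately obtain \<psi> where \<psi>: "Vector_Spaces.linear sc (sum_scale fscale fscale) \<psi>"
      "bij_betw \<psi> E (Fn l \<times> Fn f)" "\<psi> ` L = Fn l \<times> {0}"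
    using P.exists_linear_bij_mapping_subspace[OF L(1)[THEN conjunct1] subspace_E
        L(1)[THEN conjunct2] finite_E sub] dims Fn_0 by metis
  have "E \<inter> {x. snd (\<psi> x) = 0} = L"
    using \<psi>(2,3) L by (intro vimage_snd_zero_eq) (auto simp: bij_betw_def)
  then show ?thesis
    using that \<psi>(1,2) unfolding l_def f_def by blast
qed

lemma equiv_if_free_modulo:
  assumes "free_modulo L"
  shows "equiv_trivial_plus_free sc E \<rho> (dim L) (dim E - dim L)"
proof -
  have L: "subE L" and rank: "\<And>V. subE V \<Longrightarrow> \<rho> V = dim V - dim (V \<inter> L)"
    using assms unfolding free_modulo_def by blast+
  obtain \<psi> where \<psi>: "Vector_Spaces.linear sc (sum_scale fscale fscale) \<psi>"
    "bij_betw \<psi> E (Fn (dim L) \<times> Fn (dim E - dim L))" "E \<inter> {x. snd (\<psi> x) = 0} = L"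
    using exists_linear_bij_with_kernel[OF L] .
  have "sum_rank fscale rank_trivial fscale rank_free (\<psi> ` V) = \<rho> V" if V: "subE V" for V
  proof -
    have "V \<inter> {x. snd (\<psi> x) = 0} = V \<inter> L"
      using \<psi>(3) V by blast
    then show ?thesis
      using sum_rank_trivial_free_linear_image[OF \<psi>(1) bij_betw_imp_inj_on[OF \<psi>(2)] V] rank[OF V]
      by simp
  qed
  then show ?thesis
    unfolding equiv_trivial_plus_free_iff using \<psi>(1,2) by blast
qed

lemma free_modulo_if_equiv:
  assumes "equiv_trivial_plus_free sc E \<rho> l f"
  obtains L where "free_modulo L"
proof -
  interpret P: vector_space_pair sc "sum_scale (fscale :: 'a \<Rightarrow> _) fscale"
    unfolding vector_space_pair_def
    using vector_space_axioms vector_space_sum_scale vector_space_fscale by blast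
  obtain \<psi> where \<psi>: "Vector_Spaces.linear sc (sum_scale fscale fscale) \<psi>"
    "bij_betw \<psi> E (Fn l \<times> Fn f)"
    "\<And>V. subE V \<Longrightarrow> sum_rank fscale rank_trivial fscale rank_free (\<psi> ` V) = \<rho> V"
    using assms unfolding equiv_trivial_plus_free_iff by blast
  define L where "L = E \<inter> {x. snd (\<psi> x) = 0}"
  have "subspace (\<psi> -` {p. snd p = 0})"
    using P.linear_subspace_vimage[OF \<psi>(1)] subspace_snd_zero[OF vector_space_fscale vector_space_fscale] .
  then have "subE L"
    unfolding L_def using subspace_inter[OF subspace_E] by (simp add: vimage_def)
  moreover have "\<rho> V = dim V - dim (V \<inter> L)" if V: "subE V" for V
  proof -
    have "V \<inter> L = V \<inter> {x. snd (\<psi> x) = 0}"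
      unfolding L_def using V by blast
    then show ?thesis
      using sum_rank_trivial_free_linear_image[OF \<psi>(1) bij_betw_imp_inj_on[OF \<psi>(2)] V] \<psi>(3)[OF V]
      by simp
  qed
  ultimately show ?thesis
    using that unfolding free_modulo_def by blast
qed

end

theorem corollary7p10:
  fixes sc :: "'a::{field,finite} \<Rightarrow> 'b::ab_group_add \<Rightarrow> 'b"
    and E :: "'b set" and \<rho> :: "'b set \<Rightarrow> nat"
  assumes "qmatroid sc E \<rho>"
  defines "l \<equiv> Vector_Spaces.vector_space.dim sc (qcl sc E \<rho> {0})"
  defines "f \<equiv> Vector_Spaces.vector_space.dim sc E - l"
  shows "(cyclic_flats sc E \<rho> = {qcl sc E \<rho> {0}} \<longleftrightarrow> equiv_trivial_plus_free sc E \<rho> l f)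
     \<and> (card (cyclic_flats sc E \<rho>) = 1 \<longleftrightarrow> (\<exists>l' f'. equiv_trivial_plus_free sc E \<rho> l' f'))"
proof -
  interpret q_matroid sc E \<rho>
    using assms(1) by (rule q_matroid_if_qmatroid)
  have to_equiv: "equiv_trivial_plus_free sc E \<rho> l f"
    if "cyclic_flats sc E \<rho> = {qcl sc E \<rho> {0}}"
    unfolding f_def l_def by (rule equiv_if_free_modulo[OF free_modulo_loop_space[OF that]])
  have from_equiv: "cyclic_flats sc E \<rho> = {qcl sc E \<rho> {0}}"
    if "equiv_trivial_plus_free sc E \<rho> l' f'" for l' f'
    using free_modulo_if_equiv[OF that] cyclic_flats_if_free_modulo by metis
  have "card (cyclic_flats sc E \<rho>) = 1 \<longleftrightarrow> cyclic_flats sc E \<rho> = {qcl sc E \<rho> {0}}"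
  proof
    assume "card (cyclic_flats sc E \<rho>) = 1"
    then obtain V where "cyclic_flats sc E \<rho> = {V}"
      by (rule card_1_singletonE)
    then show "cyclic_flats sc E \<rho> = {qcl sc E \<rho> {0}}"
      using loop_space_cyclic_flat by simp
  qed simp
  then show ?thesis
    using to_equiv from_equiv by blast
qed

end
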